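(* Let $W$ be a stopping time in $\mathcal{T}$ and let $0<\rho<1$. Then $Cap_{\mathcal{T}}\widehat{W_{\mathcal{T}}^{\rho}}\le\rho^{-2}Cap_{\mathcal{T}}W$.
   Context: Tree. $\mathcal{T}$ is the rooted dyadic tree whose vertices are the dyadic arcs of the unit circle. The root $o$ is the whole circle. The vertices at level $n\ge0$ are the arcs $\{e^{it}:2\pi j2^{-n}\le t<2\pi(j+1)2^{-n}\}$ for $0\le j<2^n$. The two children $x_+,x_-$ of a vertex $x$ are the two arcs at the next level contained in it, and $x^{-1}$ denotes the parent. Write $y\le x$ if $x$ lies in the subtree rooted at $y$, and $y<x$ if moreover $y\ne x$. $[o,x]=\{y:y\le x\}$ is the geodesic from the root. A stopping time is a set of pairwise incomparable vertices. $\mathcal{G}(\{o\},W)$ is the union of the geodesics $[o,w]$, $w\in W$. Capacity. For $f:\mathcal{T}\to\mathbb{R}$ put $If(x)=\sum_{y\in[o,x]}f(y)$, and define $Cap_{\mathcal{T}}(W)=\inf\{\|f\|_{\ell^2(\mathcal{T})}^2: If\ge1\text{ on }W\}$. For a stopping time $W$ there is a unique minimizer $h$, and $H=Ih$ satisfies $H=1$ on $W$ and $\|h\|_{\ell^2}^2=Cap_{\mathcal{T}}W$. Capacitary blowup. For $0<\rho<1$, the capacitary blowup is $\widehat{W_{\mathcal{T}}^{\rho}}=\{t\in\mathcal{G}(\{o\},W):H(t)\ge\rho\text{ and }H(x)\le\rho\text{ for all }x<t\}$. *)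

theory Defs
  imports "HOL-Analysis.Analysis" "HOL-Library.Sublist"
begin

text \<open>Vertices of the rooted dyadic tree are encoded as binary words (bool lists):
  the root o is the empty word, the two children of x are x @ [True] and x @ [False]
  (the two dyadic sub-arcs), and y \<le> x in the tree order iff y is a prefix of x.\<close>

type_synonym vertex = "bool list"

definition tree_root :: vertex where "tree_root = []"

definition geodesic :: "vertex \<Rightarrow> vertex set" where
  "geodesic x = {y. prefix y x}"

definition stopping_time :: "vertex set \<Rightarrow> bool" where
  "stopping_time W \<longleftrightarrow> (\<forall>x\<in>W. \<forall>y\<in>W. x \<noteq> y \<longrightarrow> \<not> prefix x y \<and> \<not> prefix y x)"

definition geodesic_hull :: "vertex set \<Rightarrow> vertex set" where
  "geodesic_hull W = (\<Union>w\<in>W. geodesic w)"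

definition tree_I :: "(vertex \<Rightarrow> real) \<Rightarrow> vertex \<Rightarrow> real" where
  "tree_I f x = (\<Sum>y\<in>geodesic x. f y)"

definition l2_norm_sq :: "(vertex \<Rightarrow> real) \<Rightarrow> ennreal" where
  "l2_norm_sq f = (\<Sum>\<^sub>\<infinity>x. ennreal ((f x)\<^sup>2))"

definition tree_cap :: "vertex set \<Rightarrow> ennreal" where
  "tree_cap W = Inf {l2_norm_sq f | f. \<forall>w\<in>W. tree_I f w \<ge> 1}"

definition cap_minimizer :: "vertex set \<Rightarrow> vertex \<Rightarrow> real" where
  "cap_minimizer W = (THE h. (\<forall>w\<in>W. tree_I h w \<ge> 1) \<and> l2_norm_sq h = tree_cap W)"

definition cap_potential :: "vertex set \<Rightarrow> vertex \<Rightarrow> real" where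
  "cap_potential W = tree_I (cap_minimizer W)"

definition cap_blowup :: "vertex set \<Rightarrow> real \<Rightarrow> vertex set" where
  "cap_blowup W \<rho> = {t \<in> geodesic_hull W. cap_potential W t \<ge> \<rho> \<and>
      (\<forall>x. strict_prefix x t \<longrightarrow> cap_potential W x \<le> \<rho>)}"

end

theory Submission
  imports Defs
begin

text \<open>The set of admissible functions for the capacity of \<open>W\<close> is convex and closed under
  pointwise limits, so by the parallelogram law a minimizing sequence is pointwise Cauchy and its
  limit \<open>h\<close> is the capacitary minimizer; this works for every set \<open>W\<close>. On the capacitary blowup the potential \<open>I h\<close> is at least \<open>\<rho>\<close>,
  hence \<open>h / \<rho>\<close> is admissible for it and its capacity is at most
  \<open>\<parallel>h / \<rho>\<parallel>\<^sup>2 = \<rho>\<^sup>-\<^sup>2 Cap W\<close>.\<close>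

definition cap_admissible :: "vertex set \<Rightarrow> (vertex \<Rightarrow> real) \<Rightarrow> bool" where
  "cap_admissible W f \<longleftrightarrow> (\<forall>w\<in>W. tree_I f w \<ge> 1)"

lemma finite_geodesic: "finite (geodesic x)"
proof -
  have "geodesic x = set (prefixes x)" unfolding geodesic_def by auto
  thus ?thesis by simp
qed

lemma tree_I_scale: "tree_I (\<lambda>x. c * f x) w = c * tree_I f w"
  unfolding tree_I_def by (simp add: sum_distrib_left)

lemma tree_I_midpoint: "tree_I (\<lambda>x. (f x + g x) / 2) w = (tree_I f w + tree_I g w) / 2"
  unfolding tree_I_def by (simp add: sum_divide_distrib[symmetric] sum.distrib)

lemma cap_admissible_midpoint:
  "cap_admissible W f \<Longrightarrow> cap_admissible W g \<Longrightarrow> cap_admissible W (\<lambda>x. (f x + g x) / 2)"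
  unfolding cap_admissible_def tree_I_midpoint by fastforce

lemma cap_admissible_tendsto:
  assumes "\<And>x. (\<lambda>n. fs n x) \<longlonglongrightarrow> f x" and "\<And>n. cap_admissible W (fs n)"
  shows "cap_admissible W f"
  unfolding cap_admissible_def
proof
  fix w assume "w \<in> W"
  have "(\<lambda>n. tree_I (fs n) w) \<longlonglongrightarrow> tree_I f w"
    unfolding tree_I_def by (intro tendsto_sum assms(1))
  moreover have "\<forall>n. 1 \<le> tree_I (fs n) w"
    using assms(2) \<open>w \<in> W\<close> unfolding cap_admissible_def by blast
  ultimately show "1 \<le> tree_I f w" by (meson LIMSEQ_le_const)
qed

lemma l2_norm_sq_eq_SUP:
  "l2_norm_sq f = (SUP F\<in>{F. finite F \<and> F \<subseteq> UNIV}. ennreal (\<Sum>x\<in>F. (f x)\<^sup>2))"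
  unfolding l2_norm_sq_def by (subst nonneg_infsum_complete) auto

lemma summable_if_l2_norm_sq_finite:
  assumes "l2_norm_sq f < top"
  shows "(\<lambda>x. (f x)\<^sup>2) summable_on UNIV"
proof (rule nonneg_bdd_above_summable_on)
  show "bdd_above ((sum (\<lambda>x. (f x)\<^sup>2)) ` {F. F \<subseteq> UNIV \<and> finite F})"
  proof (rule bdd_aboveI2)
    fix F :: "vertex set" assume "F \<in> {F. F \<subseteq> UNIV \<and> finite F}"
    hence "ennreal (\<Sum>x\<in>F. (f x)\<^sup>2) \<le> l2_norm_sq f"
      unfolding l2_norm_sq_eq_SUP by (intro SUP_upper) auto
    also have "\<dots> = ennreal (enn2real (l2_norm_sq f))" using assms by simp
    finally show "(\<Sum>x\<in>F. (f x)\<^sup>2) \<le> enn2real (l2_norm_sq f)"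
      by (simp add: sum_nonneg)
  qed
qed auto

lemma l2_norm_sq_eq_infsum:
  assumes "(\<lambda>x. (f x)\<^sup>2) summable_on UNIV"
  shows "l2_norm_sq f = ennreal (\<Sum>\<^sub>\<infinity>x. (f x)\<^sup>2)"
  unfolding l2_norm_sq_eq_SUP by (subst infsum_nonneg_is_SUPREMUM_ennreal[OF assms]) auto

lemma infsum_eq_if_l2_norm_sq_eq:
  assumes "(\<lambda>x. (f x)\<^sup>2) summable_on UNIV" and "l2_norm_sq f = ennreal r" and "0 \<le> r"
  shows "(\<Sum>\<^sub>\<infinity>x. (f x)\<^sup>2) = r"
proof -
  have "0 \<le> (\<Sum>\<^sub>\<infinity>x. (f x)\<^sup>2)" by (rule infsum_nonneg) simp
  thus ?thesis using assms l2_norm_sq_eq_infsum[OF assms(1)] by simp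
qed

lemma l2_norm_sq_scale:
  assumes "c \<ge> 0"
  shows "l2_norm_sq (\<lambda>x. c * f x) = ennreal (c\<^sup>2) * l2_norm_sq f"
proof -
  have "\<And>F. ennreal (\<Sum>x\<in>F. (c * f x)\<^sup>2) = ennreal (c\<^sup>2) * ennreal (\<Sum>x\<in>F. (f x)\<^sup>2)"
    by (simp add: power_mult_distrib sum_distrib_left[symmetric] ennreal_mult sum_nonneg)
  thus ?thesis unfolding l2_norm_sq_eq_SUP by (simp add: SUP_mult_left_ennreal)
qed

lemma l2_norm_sq_le_of_tendsto:
  assumes "\<And>x. (\<lambda>n. fs n x) \<longlonglongrightarrow> f x"
    and "\<And>n. l2_norm_sq (fs n) \<le> B n" and "B \<longlonglongrightarrow> C"
  shows "l2_norm_sq f \<le> C"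
  unfolding l2_norm_sq_eq_SUP
proof (rule SUP_least)
  fix F :: "vertex set" assume "F \<in> {F. finite F \<and> F \<subseteq> UNIV}"
  have "(\<lambda>n. ennreal (\<Sum>x\<in>F. (fs n x)\<^sup>2)) \<longlonglongrightarrow> ennreal (\<Sum>x\<in>F. (f x)\<^sup>2)"
    by (intro tendsto_ennrealI tendsto_sum tendsto_power assms(1))
  moreover have "ennreal (\<Sum>x\<in>F. (fs n x)\<^sup>2) \<le> B n" for n
  proof -
    have "ennreal (\<Sum>x\<in>F. (fs n x)\<^sup>2) \<le> l2_norm_sq (fs n)"
      unfolding l2_norm_sq_eq_SUP using \<open>F \<in> _\<close> by (intro SUP_upper)
    thus ?thesis using assms(2) order_trans by blast
  qed
  ultimately show "ennreal (\<Sum>x\<in>F. (f x)\<^sup>2) \<le> C"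
    using assms(3) by (intro LIMSEQ_le) auto
qed

lemma parallelogram_infsum:
  fixes f g :: "'a \<Rightarrow> real"
  assumes f: "(\<lambda>x. (f x)\<^sup>2) summable_on UNIV" and g: "(\<lambda>x. (g x)\<^sup>2) summable_on UNIV"
  shows "(\<lambda>x. ((f x + g x) / 2)\<^sup>2) summable_on UNIV"
    and "(\<lambda>x. ((f x - g x) / 2)\<^sup>2) summable_on UNIV"
    and "(\<Sum>\<^sub>\<infinity>x. ((f x + g x) / 2)\<^sup>2) + (\<Sum>\<^sub>\<infinity>x. ((f x - g x) / 2)\<^sup>2)
      = ((\<Sum>\<^sub>\<infinity>x. (f x)\<^sup>2) + (\<Sum>\<^sub>\<infinity>x. (g x)\<^sup>2)) / 2"
proof -
  have identity: "((a + b) / 2)\<^sup>2 + ((a - b) / 2)\<^sup>2 = (a\<^sup>2 + b\<^sup>2) / 2" for a b :: real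
    by (simp add: power2_eq_square field_simps)
  have bound: "((a + b) / 2)\<^sup>2 \<le> (a\<^sup>2 + b\<^sup>2) / 2" "((a - b) / 2)\<^sup>2 \<le> (a\<^sup>2 + b\<^sup>2) / 2"
    for a b :: real
    using identity[of a b] zero_le_power2[of "(a + b) / 2"] zero_le_power2[of "(a - b) / 2"]
    by linarith+
  have half: "(\<lambda>x. ((f x)\<^sup>2 + (g x)\<^sup>2) / 2) summable_on UNIV"
    unfolding divide_inverse by (intro summable_on_cmult_left summable_on_add f g)
  show plus: "(\<lambda>x. ((f x + g x) / 2)\<^sup>2) summable_on UNIV"
    by (rule summable_on_comparison_test[OF half]) (use bound in auto)
  show minus: "(\<lambda>x. ((f x - g x) / 2)\<^sup>2) summable_on UNIV"
    by (rule summable_on_comparison_test[OF half]) (use bound in auto)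
  have "(\<Sum>\<^sub>\<infinity>x. ((f x + g x) / 2)\<^sup>2) + (\<Sum>\<^sub>\<infinity>x. ((f x - g x) / 2)\<^sup>2)
      = (\<Sum>\<^sub>\<infinity>x. ((f x)\<^sup>2 + (g x)\<^sup>2) / 2)"
    by (simp only: infsum_add[OF plus minus, symmetric] identity)
  also have "\<dots> = ((\<Sum>\<^sub>\<infinity>x. (f x)\<^sup>2) + (\<Sum>\<^sub>\<infinity>x. (g x)\<^sup>2)) / 2"
    by (simp only: divide_inverse infsum_cmult_left' infsum_add[OF f g])
  finally show "(\<Sum>\<^sub>\<infinity>x. ((f x + g x) / 2)\<^sup>2) + (\<Sum>\<^sub>\<infinity>x. ((f x - g x) / 2)\<^sup>2)
      = ((\<Sum>\<^sub>\<infinity>x. (f x)\<^sup>2) + (\<Sum>\<^sub>\<infinity>x. (g x)\<^sup>2)) / 2" .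
qed

lemma tree_cap_le: "cap_admissible W f \<Longrightarrow> tree_cap W \<le> l2_norm_sq f"
  unfolding tree_cap_def cap_admissible_def by (intro Inf_lower) blast

lemma tree_cap_less_top: "tree_cap W < top"
proof -
  define root_indicator :: "vertex \<Rightarrow> real" where "root_indicator x = (if x = [] then 1 else 0)" for x
  have "cap_admissible W root_indicator"
    unfolding cap_admissible_def tree_I_def root_indicator_def
    using finite_geodesic by (auto simp: geodesic_def)
  moreover have "l2_norm_sq root_indicator \<le> 1"
    unfolding l2_norm_sq_eq_SUP
  proof (rule SUP_least)
    fix F :: "vertex set" assume "F \<in> {F. finite F \<and> F \<subseteq> UNIV}"
    hence "(\<Sum>x\<in>F. (root_indicator x)\<^sup>2) = (\<Sum>x\<in>F. if x = [] then 1 else 0)"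
      unfolding root_indicator_def by (intro sum.cong) auto
    also have "\<dots> \<le> 1" using \<open>F \<in> _\<close> by simp
    finally show "ennreal (\<Sum>x\<in>F. (root_indicator x)\<^sup>2) \<le> 1" by simp
  qed
  ultimately have "tree_cap W \<le> 1" using tree_cap_le order_trans by blast
  thus ?thesis using order.strict_trans1 by fastforce
qed

lemma tree_cap_eq_ennreal: "tree_cap W = ennreal (enn2real (tree_cap W))"
  using tree_cap_less_top by simp

lemma tree_cap_le_infsum:
  assumes "cap_admissible W g" and "(\<lambda>x. (g x)\<^sup>2) summable_on UNIV"
  shows "enn2real (tree_cap W) \<le> (\<Sum>\<^sub>\<infinity>x. (g x)\<^sup>2)"
proof -
  have "ennreal (enn2real (tree_cap W)) \<le> ennreal (\<Sum>\<^sub>\<infinity>x. (g x)\<^sup>2)"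
    using tree_cap_le[OF assms(1)] l2_norm_sq_eq_infsum[OF assms(2)] tree_cap_eq_ennreal by metis
  moreover have "0 \<le> (\<Sum>\<^sub>\<infinity>x. (g x)\<^sup>2)" by (rule infsum_nonneg) simp
  ultimately show ?thesis by simp
qed

text \<open>Uniform convexity: two admissible functions whose norms are close to the capacity are
  pointwise close, because their midpoint is admissible too.\<close>

lemma cap_admissible_pointwise_dist:
  assumes "cap_admissible W f" "cap_admissible W g"
    and f: "(\<lambda>x. (f x)\<^sup>2) summable_on UNIV" and g: "(\<lambda>x. (g x)\<^sup>2) summable_on UNIV"
  shows "(f x - g x)\<^sup>2
    \<le> 2 * (\<Sum>\<^sub>\<infinity>y. (f y)\<^sup>2) + 2 * (\<Sum>\<^sub>\<infinity>y. (g y)\<^sup>2) - 4 * enn2real (tree_cap W)"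
proof -
  note P = parallelogram_infsum[OF f g]
  have "enn2real (tree_cap W) \<le> (\<Sum>\<^sub>\<infinity>y. ((f y + g y) / 2)\<^sup>2)"
    by (rule tree_cap_le_infsum[OF cap_admissible_midpoint[OF assms(1,2)] P(1)])
  moreover have "(f x - g x)\<^sup>2 / 4 \<le> (\<Sum>\<^sub>\<infinity>y. ((f y - g y) / 2)\<^sup>2)"
    using finite_sum_le_infsum[OF P(2), of "{x}"] by (simp add: power_divide)
  moreover have "2 * (\<Sum>\<^sub>\<infinity>y. ((f y + g y) / 2)\<^sup>2) + 2 * (\<Sum>\<^sub>\<infinity>y. ((f y - g y) / 2)\<^sup>2)
      = (\<Sum>\<^sub>\<infinity>y. (f y)\<^sup>2) + (\<Sum>\<^sub>\<infinity>y. (g y)\<^sup>2)"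
    using P(3) by simp
  ultimately show ?thesis by linarith
qed

lemma cap_minimizer_unique:
  assumes "cap_admissible W h1" "l2_norm_sq h1 = tree_cap W"
    and "cap_admissible W h2" "l2_norm_sq h2 = tree_cap W"
  shows "h1 = h2"
proof
  fix x
  define c where "c = enn2real (tree_cap W)"
  have "tree_cap W = ennreal c" "0 \<le> c"
    unfolding c_def using tree_cap_eq_ennreal by simp_all
  have s1: "(\<lambda>x. (h1 x)\<^sup>2) summable_on UNIV" and s2: "(\<lambda>x. (h2 x)\<^sup>2) summable_on UNIV"
    using summable_if_l2_norm_sq_finite assms(2,4) tree_cap_less_top by metis+
  have "(\<Sum>\<^sub>\<infinity>x. (h1 x)\<^sup>2) = c" "(\<Sum>\<^sub>\<infinity>x. (h2 x)\<^sup>2) = c"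
    using infsum_eq_if_l2_norm_sq_eq s1 s2 assms(2,4) \<open>tree_cap W = ennreal c\<close> \<open>0 \<le> c\<close> by metis+
  hence "(h1 x - h2 x)\<^sup>2 \<le> 0"
    using cap_admissible_pointwise_dist[OF assms(1,3) s1 s2, of x] unfolding c_def by simp
  thus "h1 x = h2 x" by simp
qed

lemma Cauchy_if_sq_dist_le:
  fixes X :: "nat \<Rightarrow> real"
  assumes "\<And>m n. (X m - X n)\<^sup>2 \<le> 2 * inverse (real (Suc m)) + 2 * inverse (real (Suc n))"
  shows "Cauchy X"
  unfolding Cauchy_def
proof (intro allI impI)
  fix e :: real assume "0 < e"
  then obtain M where M: "inverse (real (Suc M)) < e\<^sup>2 / 4"
    using reals_Archimedean[of "e\<^sup>2 / 4"] by auto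
  show "\<exists>M. \<forall>m\<ge>M. \<forall>n\<ge>M. dist (X m) (X n) < e"
  proof (intro exI allI impI)
    fix m n assume "M \<le> m" "M \<le> n"
    hence "inverse (real (Suc m)) \<le> inverse (real (Suc M))"
      "inverse (real (Suc n)) \<le> inverse (real (Suc M))"
      by (simp_all add: le_imp_inverse_le)
    hence "(X m - X n)\<^sup>2 < e\<^sup>2" using assms[of m n] M by linarith
    thus "dist (X m) (X n) < e"
      using \<open>0 < e\<close> power2_less_imp_less[of "\<bar>X m - X n\<bar>" e] by (simp add: dist_real_def)
  qed
qed

lemma cap_minimizer_exists: "\<exists>h. cap_admissible W h \<and> l2_norm_sq h = tree_cap W"
proof -
  define c where "c = enn2real (tree_cap W)"
  have cap_eq: "tree_cap W = ennreal c" and "0 \<le> c"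
    unfolding c_def using tree_cap_eq_ennreal by simp_all
  define bound where "bound n = c + inverse (real (Suc n))" for n
  have "\<exists>f. cap_admissible W f \<and> l2_norm_sq f < ennreal (bound n)" for n
  proof -
    have "tree_cap W < ennreal (bound n)"
      using cap_eq \<open>0 \<le> c\<close> by (simp add: bound_def ennreal_less_iff)
    thus ?thesis unfolding tree_cap_def Inf_less_iff cap_admissible_def by blast
  qed
  then obtain fs where admissible: "\<And>n. cap_admissible W (fs n)"
    and norm_less: "\<And>n. l2_norm_sq (fs n) < ennreal (bound n)" by metis
  have summable: "(\<lambda>x. (fs n x)\<^sup>2) summable_on UNIV" for n
    using norm_less summable_if_l2_norm_sq_finite ennreal_less_top order.strict_trans by metis
  have infsum_less: "(\<Sum>\<^sub>\<infinity>x. (fs n x)\<^sup>2) < bound n" for n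
  proof -
    have "0 \<le> (\<Sum>\<^sub>\<infinity>x. (fs n x)\<^sup>2)" by (rule infsum_nonneg) simp
    thus ?thesis
      using norm_less[of n] l2_norm_sq_eq_infsum[OF summable] by (simp add: ennreal_less_iff)
  qed
  have Cauchy: "Cauchy (\<lambda>n. fs n x)" for x
  proof (rule Cauchy_if_sq_dist_le)
    fix m n
    show "(fs m x - fs n x)\<^sup>2 \<le> 2 * inverse (real (Suc m)) + 2 * inverse (real (Suc n))"
      using cap_admissible_pointwise_dist[OF admissible[of m] admissible[of n] summable[of m] summable[of n],
          of x]
        infsum_less[of m] infsum_less[of n]
      unfolding bound_def c_def[symmetric] by linarith
  qed
  define f where "f x = lim (\<lambda>n. fs n x)" for x
  have conv: "(\<lambda>n. fs n x) \<longlonglongrightarrow> f x" for x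
    unfolding f_def using Cauchy[of x] Cauchy_convergent_iff convergent_LIMSEQ_iff by blast
  have "cap_admissible W f" by (rule cap_admissible_tendsto[OF conv admissible])
  moreover have "l2_norm_sq f \<le> ennreal c"
  proof (rule l2_norm_sq_le_of_tendsto[OF conv])
    show "l2_norm_sq (fs n) \<le> ennreal (bound n)" for n using norm_less[of n] by simp
    show "(\<lambda>n. ennreal (bound n)) \<longlonglongrightarrow> ennreal c"
      unfolding bound_def by (intro tendsto_ennrealI LIMSEQ_inverse_real_of_nat_add)
  qed
  ultimately show ?thesis using tree_cap_le cap_eq antisym by metis
qed

lemma cap_minimizer:
  "cap_admissible W (cap_minimizer W) \<and> l2_norm_sq (cap_minimizer W) = tree_cap W"
proof -
  have "\<exists>!h. (\<forall>w\<in>W. tree_I h w \<ge> 1) \<and> l2_norm_sq h = tree_cap W"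
    using cap_minimizer_exists[of W] cap_minimizer_unique[of W]
    unfolding cap_admissible_def by blast
  thus ?thesis unfolding cap_minimizer_def cap_admissible_def by (rule theI')
qed

lemma tree_cap_le_if_potential_ge:
  assumes "0 < \<rho>" and "\<And>t. t \<in> S \<Longrightarrow> \<rho> \<le> cap_potential W t"
  shows "tree_cap S \<le> ennreal (1 / \<rho>\<^sup>2) * tree_cap W"
proof -
  define h where "h = cap_minimizer W"
  have "cap_admissible S (\<lambda>x. (1 / \<rho>) * h x)"
    unfolding cap_admissible_def tree_I_scale
    using assms unfolding cap_potential_def h_def by (simp add: field_simps)
  hence "tree_cap S \<le> l2_norm_sq (\<lambda>x. (1 / \<rho>) * h x)" by (rule tree_cap_le)
  also have "\<dots> = ennreal ((1 / \<rho>)\<^sup>2) * l2_norm_sq h"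
    using assms(1) by (intro l2_norm_sq_scale) simp
  also have "\<dots> = ennreal (1 / \<rho>\<^sup>2) * tree_cap W"
    using cap_minimizer[of W] unfolding h_def by (simp add: power_divide)
  finally show ?thesis .
qed

theorem mainTheorem3:
  fixes W :: "vertex set" and \<rho> :: real
  assumes "stopping_time W" and "0 < \<rho>" and "\<rho> < 1"
  shows "tree_cap (cap_blowup W \<rho>) \<le> ennreal (1 / \<rho>\<^sup>2) * tree_cap W"
  using assms(2) by (rule tree_cap_le_if_potential_ge) (simp add: cap_blowup_def)

end
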